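(* Let $(\lambda_i)_{i\ge1}$ be a sequence with $0\le\lambda_i<\lambda_{\max}$ for all $i$ and $\lim_{n\to\infty}\frac{\lambda_1+\dots+\lambda_n}{n}=\bar\lambda$. For each $n$ let $\mathbf{v}^{(n)}\sim\mathcal{CN}(\mathbf{0},\mathrm{diag}(\lambda_1,\dots,\lambda_n))$, and let $\omega_n$ be an eigenvalue of the rank-one matrix $\mathbf{v}^{(n)}(\mathbf{v}^{(n)})^H$ selected uniformly at random among its $n$ eigenvalues (counted with multiplicity), independently of $\mathbf{v}^{(n)}$. Let $\kappa_j(\omega_n)$ denote the $j$-th cumulant of $\omega_n$ and $\mathcal{R}_{\omega_n}(s)=\sum_{k\ge0}\kappa_{k+1}(\omega_n)s^k$ its $\mathcal{R}$-transform (as a formal power series). Then for every $k\ge0$, $$\lim_{n\to\infty}\frac{\kappa_{k+1}(\omega_n)}{n^k}=\bar\lambda^{k+1},$$ i.e. $\mathcal{R}_{\omega_n}(s/n)$ converges coefficientwise to $\sum_{k\ge0}\bar\lambda^{k+1}s^k=\frac{\bar\lambda}{1-s\bar\lambda}$.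
   Context: The $j$-th cumulant of a random variable $X$ with all moments finite is $\kappa_j=\frac{d^j}{ds^j}\log\mathbb{E}[e^{sX}]\big|_{s=0}$ (equivalently defined via the moment–cumulant relations). *)

theory Defs
  imports "HOL-Probability.Probability" "Jordan_Normal_Form.Char_Poly"
    "HOL-Computational_Algebra.Fundamental_Theorem_Algebra"
begin

text \<open>Cumulants from the moment sequence m (m k = E[X^k]) via the moment-cumulant relation
  kappa_n = m_n - sum_{j=1}^{n-1} binom(n-1, j-1) kappa_j m_{n-j}.\<close>
fun cumulant :: "(nat \<Rightarrow> real) \<Rightarrow> nat \<Rightarrow> real" where
  "cumulant m n = (if n = 0 then 0 else
      m n - (\<Sum>j\<in>{1..<n}. real ((n - 1) choose (j - 1)) * cumulant m j * m (n - j)))"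

declare cumulant.simps[simp del]

definition moments :: "'a measure \<Rightarrow> ('a \<Rightarrow> real) \<Rightarrow> nat \<Rightarrow> real" where
  "moments M X k = integral\<^sup>L M (\<lambda>x. X x ^ k)"

text \<open>The n-vector v (components v 0, ..., v (n-1)) is circularly-symmetric complex Gaussian
  CN(0, diag(lam 0, ..., lam (n-1))), defined via its characteristic function
  E[exp(i Re(w^H v))] = exp(-w^H Sigma w / 4).\<close>
definition complex_gaussian_diag ::
  "'a measure \<Rightarrow> nat \<Rightarrow> (nat \<Rightarrow> real) \<Rightarrow> ('a \<Rightarrow> nat \<Rightarrow> complex) \<Rightarrow> bool" where
  "complex_gaussian_diag M n lam v \<longleftrightarrow>
     (\<forall>i<n. (\<lambda>x. v x i) \<in> borel_measurable M) \<and>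
     (\<forall>w :: nat \<Rightarrow> complex.
        integral\<^sup>L M (\<lambda>x. exp (\<i> * complex_of_real (Re (\<Sum>k<n. cnj (w k) * v x k))))
        = exp (- complex_of_real ((\<Sum>k<n. lam k * (cmod (w k))\<^sup>2) / 4)))"

definition rank_one_mat :: "nat \<Rightarrow> (nat \<Rightarrow> complex) \<Rightarrow> complex mat" where
  "rank_one_mat n v = mat n n (\<lambda>(i, j). v i * cnj (v j))"

text \<open>The eigenvalues of v v^H counted with multiplicity (roots of the characteristic polynomial;
  they are real since the matrix is Hermitian), listed in increasing order.\<close>
definition eigenvalue_list :: "nat \<Rightarrow> (nat \<Rightarrow> complex) \<Rightarrow> real list" where
  "eigenvalue_list n v =
     sorted_list_of_multiset (image_mset Re (proots (char_poly (rank_one_mat n v))))"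

end

theory Submission
  imports Defs "Jordan_Normal_Form.Schur_Decomposition"
begin

text \<open>The matrix \<open>v v\<^sup>H\<close> has the eigenvalue \<open>\<parallel>v\<parallel>\<^sup>2\<close> once and \<open>0\<close> with multiplicity \<open>n - 1\<close>, so
  \<open>\<omega>\<^sub>n\<close> equals \<open>\<parallel>v\<parallel>\<^sup>2\<close> with probability \<open>1/n\<close> and \<open>0\<close> otherwise; by independence
  \<open>E[\<omega>\<^sub>n\<^sup>j] = E[(\<parallel>v\<parallel>\<^sup>2)\<^sup>j] / n\<close>. Since \<open>\<parallel>v\<parallel>\<^sup>2 = \<Sum>\<^sub>k \<lambda>\<^sub>k E\<^sub>k\<close> with independent standard exponential
  \<open>E\<^sub>k\<close>, one has \<open>E[(\<parallel>v\<parallel>\<^sup>2)\<^sup>j] = j! h\<^sub>j(\<lambda>\<^sub>1, \<dots>, \<lambda>\<^sub>n)\<close> with \<open>h\<^sub>j\<close> the complete homogeneous symmetric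
  polynomial. The hypothesis only gives the characteristic function of \<open>v\<close>; this moment is obtained
  without multivariate L\'evy uniqueness by integrating the \<open>2j\<close>-th power of a real projection
  \<open>Re (w\<^sup>H v)\<close>, with \<open>w\<close> an independent standard Gaussian vector, in both orders.

  Newton's identity \<open>j h\<^sub>j = \<Sum>\<^sub>i p\<^sub>i h\<^sub>j\<^sub>-\<^sub>i\<close> for the power sums \<open>p\<^sub>i\<close> gives \<open>j! h\<^sub>j / n\<^sup>j \<rightarrow> \<lambda>\<^sup>j\<close>
  (with \<open>\<lambda>\<close> the mean \<open>lam_bar\<close>), because \<open>p\<^sub>1 / n \<rightarrow> \<lambda>\<close> while \<open>p\<^sub>i / n\<^sup>i \<rightarrow> 0\<close> for \<open>i \<ge> 2\<close> by the uniform
  bound on the \<open>\<lambda>\<^sub>k\<close>. So the moments satisfy \<open>m\<^sub>j\<^sub>+\<^sub>1 / n\<^sup>j \<rightarrow> \<lambda>\<^sup>j\<^sup>+\<^sup>1\<close>, and in the moment-cumulant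
  recursion for \<open>\<kappa>\<^sub>j\<^sub>+\<^sub>1\<close> every product \<open>\<kappa>\<^sub>i m\<^sub>j\<^sub>+\<^sub>1\<^sub>-\<^sub>i\<close> is of lower order \<open>O(n\<^sup>j\<^sup>-\<^sup>1)\<close>.\<close>

section \<open>Eigenvalues of a rank-one Hermitian matrix\<close>

definition mat_trace :: "'a::comm_ring_1 mat \<Rightarrow> 'a" where
  "mat_trace A = (\<Sum>i<dim_row A. A $$ (i, i))"

lemma mat_trace_mult_comm:
  fixes A B :: "'a::comm_ring_1 mat"
  assumes "A \<in> carrier_mat n m" "B \<in> carrier_mat m n"
  shows "mat_trace (A * B) = mat_trace (B * A)"
proof -
  have "mat_trace (A * B) = (\<Sum>i<n. \<Sum>k<m. A $$ (i, k) * B $$ (k, i))"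
    using assms by (auto simp: mat_trace_def scalar_prod_def lessThan_atLeast0 intro!: sum.cong)
  also have "\<dots> = (\<Sum>k<m. \<Sum>i<n. B $$ (k, i) * A $$ (i, k))"
    by (subst sum.swap) (simp add: mult.commute)
  also have "\<dots> = mat_trace (B * A)"
    using assms by (auto simp: mat_trace_def scalar_prod_def lessThan_atLeast0 intro!: sum.cong)
  finally show ?thesis .
qed

lemma similar_mat_trace:
  fixes A B :: "'a::comm_ring_1 mat"
  assumes "similar_mat A B"
  shows "mat_trace A = mat_trace B"
proof -
  obtain n P Q where carrier: "{A, B, P, Q} \<subseteq> carrier_mat n n"
    and QP: "Q * P = 1\<^sub>m n" and A: "A = P * B * Q"
    using similar_matD[OF assms] by blast
  have "mat_trace A = mat_trace (P * (B * Q))"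
    using carrier by (simp add: A assoc_mult_mat[of _ n n _ n _ n])
  also have "\<dots> = mat_trace (B * Q * P)"
    using carrier by (intro mat_trace_mult_comm[of _ n n]) auto
  also have "\<dots> = mat_trace B"
    using carrier by (auto simp: QP assoc_mult_mat[of _ n n _ n _ n])
  finally show ?thesis .
qed

lemma similar_mat_square_eq_smult:
  fixes A B :: "'a::comm_ring_1 mat"
  assumes "similar_mat A B" and "A * A = c \<cdot>\<^sub>m A"
  shows "B * B = c \<cdot>\<^sub>m B"
proof -
  obtain P Q where wit: "similar_mat_wit B A Q P"
    using assms(1) similar_mat_wit_sym unfolding similar_mat_def by blast
  obtain n where carrier: "{A, B, P, Q} \<subseteq> carrier_mat n n"
    using similar_mat_witD[OF refl wit] by blast
  have "B * B = B ^\<^sub>m 2"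
    using carrier by (simp add: numeral_2_eq_2)
  also have "\<dots> = Q * (A * A) * P"
    using similar_mat_wit_pow_id[OF wit, of 2] carrier by (simp add: numeral_2_eq_2)
  also have "\<dots> = Q * (c \<cdot>\<^sub>m A) * P"
    by (simp add: assms(2))
  also have "\<dots> = c \<cdot>\<^sub>m B"
    using similar_mat_wit_pow_id[OF similar_mat_wit_smult[OF wit, of c], of 1] carrier
    by simp
  finally show ?thesis .
qed

lemma upper_triangular_square_diag:
  fixes B :: "'a::comm_ring_1 mat"
  assumes "B \<in> carrier_mat n n" "upper_triangular B" "i < n"
  shows "(B * B) $$ (i, i) = B $$ (i, i) ^ 2"
proof -
  have "(B * B) $$ (i, i) = (\<Sum>k\<in>{0..<n}. B $$ (i, k) * B $$ (k, i))"
    using assms by (auto simp: scalar_prod_def)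
  also have "\<dots> = (\<Sum>k\<in>{i}. B $$ (i, k) * B $$ (k, i))"
    using assms by (intro sum.mono_neutral_right)
      (auto simp: upper_triangular_def, metis linorder_neqE_nat mult_zero_left mult_zero_right)
  finally show ?thesis by (simp add: power2_eq_square)
qed

definition sq_norm_vec :: "nat \<Rightarrow> (nat \<Rightarrow> complex) \<Rightarrow> real" where
  "sq_norm_vec n v = (\<Sum>k<n. (cmod (v k))\<^sup>2)"

lemma sq_norm_vec_nonneg: "sq_norm_vec n v \<ge> 0"
  by (simp add: sq_norm_vec_def sum_nonneg)

lemma sum_cnj_mult_self: "(\<Sum>k<n. v k * cnj (v k)) = complex_of_real (sq_norm_vec n v)"
  unfolding sq_norm_vec_def of_real_sum
  by (rule sum.cong) (simp_all add: complex_norm_square[symmetric])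

lemma rank_one_mat_carrier: "rank_one_mat n v \<in> carrier_mat n n"
  by (simp add: rank_one_mat_def)

lemma rank_one_mat_square:
  "rank_one_mat n v * rank_one_mat n v = complex_of_real (sq_norm_vec n v) \<cdot>\<^sub>m rank_one_mat n v"
proof (rule eq_matI)
  fix i j assume "i < dim_row (complex_of_real (sq_norm_vec n v) \<cdot>\<^sub>m rank_one_mat n v)"
    "j < dim_col (complex_of_real (sq_norm_vec n v) \<cdot>\<^sub>m rank_one_mat n v)"
  then have ij: "i < n" "j < n" by (auto simp: rank_one_mat_def)
  have "(rank_one_mat n v * rank_one_mat n v) $$ (i, j)
      = (\<Sum>k<n. v i * cnj (v k) * (v k * cnj (v j)))"
    using ij by (auto simp: rank_one_mat_def scalar_prod_def lessThan_atLeast0)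
  also have "\<dots> = v i * cnj (v j) * (\<Sum>k<n. v k * cnj (v k))"
    by (simp add: sum_distrib_left mult_ac)
  finally show "(rank_one_mat n v * rank_one_mat n v) $$ (i, j)
      = (complex_of_real (sq_norm_vec n v) \<cdot>\<^sub>m rank_one_mat n v) $$ (i, j)"
    using ij by (simp add: rank_one_mat_def sum_cnj_mult_self mult_ac)
qed (auto simp: rank_one_mat_def)

lemma rank_one_mat_trace: "mat_trace (rank_one_mat n v) = complex_of_real (sq_norm_vec n v)"
  by (simp add: mat_trace_def rank_one_mat_def sum_cnj_mult_self)

lemma mset_zero_or_value:
  fixes D :: "'a::{idom, ring_char_0} multiset"
  assumes "set_mset D \<subseteq> {0, s}" "sum_mset D = s" "D \<noteq> {#}"
  shows "D = replicate_mset (size D - 1) 0 + {#s#}"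
proof (cases "s = 0")
  case True
  then have "D = replicate_mset (size D) 0"
    using assms(1) by (simp add: set_mset_subset_singletonD)
  then show ?thesis
    using assms(3) True by (cases "size D") auto
next
  case False
  have D: "D = replicate_mset (count D 0) 0 + replicate_mset (count D s) s"
  proof (rule multiset_eqI)
    fix x
    show "count D x = count (replicate_mset (count D 0) 0 + replicate_mset (count D s) s) x"
    proof (cases "x \<in> {0, s}")
      case False
      then have "count D x = 0"
        using assms(1) by (auto simp: count_eq_zero_iff)
      with False show ?thesis by auto
    qed (use \<open>s \<noteq> 0\<close> in auto)
  qed
  then have "sum_mset D = of_nat (count D s) * s"
    by (metis sum_mset.union sum_mset_replicate_mset mult_zero_right add_0)
  then have "s = of_nat (count D s) * s"
    using assms(2) by simp
  then have "count D s = 1"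
    using False by (metis mult_cancel_right1 of_nat_eq_1_iff)
  moreover have "size D = count D 0 + count D s"
    by (subst D) simp
  ultimately show ?thesis
    by (subst D) simp
qed

lemma proots_prod_linear_factors: "proots (\<Prod>a\<leftarrow>as. [:- a, 1:]) = mset (as :: 'a::idom list)"
proof (induction as)
  case (Cons a as)
  have "(\<Prod>a\<leftarrow>as. [:- a, 1:]) \<noteq> 0"
    by (auto simp: prod_list_zero_iff)
  with Cons show ?case
    by (simp add: proots_mult del: mult_pCons_left)
qed simp

lemma proots_char_poly_upper_triangular:
  fixes A B :: "'a::idom mat"
  assumes "similar_mat A B" "B \<in> carrier_mat n n" "upper_triangular B"
  shows "proots (char_poly A) = mset (diag_mat B)"
  using char_poly_similar[OF assms(1)] char_poly_upper_triangular[OF assms(2,3)]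
  by (simp add: proots_prod_linear_factors)

lemma diag_mat_square_eq_smult:
  fixes B :: "'a::idom mat"
  assumes "B \<in> carrier_mat n n" "upper_triangular B" "B * B = s \<cdot>\<^sub>m B"
  shows "set (diag_mat B) \<subseteq> {0, s}"
proof
  fix d assume "d \<in> set (diag_mat B)"
  then obtain i where i: "i < n" "d = B $$ (i, i)"
    using assms(1) by (auto simp: diag_mat_def)
  then have "d * d = s * d"
    using upper_triangular_square_diag[OF assms(1,2) i(1)] assms(1,3) by (auto simp: power2_eq_square)
  then show "d \<in> {0, s}"
    by (auto simp: algebra_simps)
qed

lemma proots_char_poly_rank_one_mat:
  assumes "n \<ge> 1"
  shows "proots (char_poly (rank_one_mat n v))
    = replicate_mset (n - 1) 0 + {#complex_of_real (sq_norm_vec n v)#}"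
proof -
  define A where "A = rank_one_mat n v"
  define s where "s = complex_of_real (sq_norm_vec n v)"
  have A: "A \<in> carrier_mat n n"
    by (simp add: A_def rank_one_mat_carrier)
  obtain es where "char_poly A = (\<Prod>a\<leftarrow>es. [:- a, 1:])"
    using char_poly_factorized[OF A] by blast
  then obtain B where B: "B \<in> carrier_mat n n" "upper_triangular B" "similar_mat A B"
    using schur_decomposition_exists[OF A] by blast
  have "B * B = s \<cdot>\<^sub>m B"
    using similar_mat_square_eq_smult[OF B(3)] rank_one_mat_square by (simp add: A_def s_def)
  then have "set_mset (mset (diag_mat B)) \<subseteq> {0, s}"
    using diag_mat_square_eq_smult[OF B(1,2)] by simp
  moreover have "sum_mset (mset (diag_mat B)) = s"
  proof -
    have "sum_mset (mset (diag_mat B)) = mat_trace B"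
      using B(1) unfolding sum_mset_sum_list
      by (simp add: diag_mat_def mat_trace_def interv_sum_list_conv_sum_set_nat lessThan_atLeast0)
    also have "\<dots> = s"
      using similar_mat_trace[OF B(3)] by (simp add: A_def s_def rank_one_mat_trace)
    finally show ?thesis .
  qed
  moreover have "size (mset (diag_mat B)) = n"
    using B(1) by (simp add: diag_mat_def)
  ultimately show ?thesis
    using mset_zero_or_value[of "mset (diag_mat B)" s] assms
      proots_char_poly_upper_triangular[OF B(3,1,2)]
    by (fastforce simp: A_def s_def)
qed

lemma eigenvalue_list_rank_one:
  assumes "n \<ge> 1"
  shows "eigenvalue_list n v = replicate (n - 1) 0 @ [sq_norm_vec n v]"
proof -
  have "image_mset Re (proots (char_poly (rank_one_mat n v))) = mset (replicate (n - 1) 0 @ [sq_norm_vec n v])"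
    by (simp add: proots_char_poly_rank_one_mat[OF assms])
  moreover have "sorted (replicate (n - 1) 0 @ [sq_norm_vec n v])"
    using sq_norm_vec_nonneg[of n v] by (auto simp: sorted_append)
  ultimately show ?thesis
    unfolding eigenvalue_list_def by (metis sorted_list_of_multiset_mset sorted_sort_id)
qed

section \<open>Complete homogeneous symmetric polynomials\<close>

fun complete_hom :: "(nat \<Rightarrow> real) \<Rightarrow> nat \<Rightarrow> nat \<Rightarrow> real" where
  "complete_hom lam 0 j = (if j = 0 then 1 else 0)"
| "complete_hom lam (Suc n) j = (\<Sum>i\<le>j. complete_hom lam n (j - i) * lam n ^ i)"

definition power_sum :: "(nat \<Rightarrow> real) \<Rightarrow> nat \<Rightarrow> nat \<Rightarrow> real" where
  "power_sum lam n i = (\<Sum>k<n. lam k ^ i)"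

lemma complete_hom_0_right [simp]: "complete_hom lam n 0 = 1"
  by (induction n) auto

lemma complete_hom_nonneg: "(\<And>i. 0 \<le> lam i) \<Longrightarrow> 0 \<le> complete_hom lam n j"
  by (induction n arbitrary: j) (auto intro!: sum_nonneg)

lemma complete_hom_Suc_Suc:
  "complete_hom lam (Suc n) (Suc j) = complete_hom lam n (Suc j) + lam n * complete_hom lam (Suc n) j"
proof -
  have "complete_hom lam (Suc n) (Suc j)
      = complete_hom lam n (Suc j) + (\<Sum>i\<le>j. complete_hom lam n (j - i) * lam n ^ Suc i)"
    by (simp only: complete_hom.simps sum.atMost_Suc_shift) simp
  also have "(\<Sum>i\<le>j. complete_hom lam n (j - i) * lam n ^ Suc i) = lam n * complete_hom lam (Suc n) j"
    by (simp add: sum_distrib_left mult_ac)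
  finally show ?thesis .
qed

lemma power_sum_Suc: "power_sum lam (Suc n) i = power_sum lam n i + lam n ^ i"
  by (simp add: power_sum_def)

lemma power_sum_bounds:
  assumes "\<And>i. 0 \<le> lam i" "\<And>i. lam i \<le> L"
  shows "0 \<le> power_sum lam n i" "power_sum lam n i \<le> real n * L ^ i"
proof -
  show "0 \<le> power_sum lam n i"
    using assms by (auto simp: power_sum_def intro: sum_nonneg)
  have "power_sum lam n i \<le> (\<Sum>k<n. L ^ i)"
    unfolding power_sum_def using assms by (intro sum_mono power_mono) auto
  then show "power_sum lam n i \<le> real n * L ^ i"
    by simp
qed

lemma newton_identity_complete_hom:
  "real j * complete_hom lam n j = (\<Sum>i=1..j. power_sum lam n i * complete_hom lam n (j - i))"
proof (induction n arbitrary: j)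
  case 0
  then show ?case by (simp add: power_sum_def)
next
  case (Suc n)
  note IH_n = Suc.IH
  let ?h = "complete_hom lam" and ?p = "power_sum lam (Suc n)" and ?x = "lam n"
  show ?case
  proof (induction j)
    case (Suc j)
    have h_shift: "(\<Sum>i=1..Suc j. ?x ^ i * ?h n (Suc j - i)) = ?x * ?h (Suc n) j"
    proof -
      have "(\<Sum>i=1..Suc j. ?x ^ i * ?h n (Suc j - i)) = (\<Sum>i<Suc j. ?x ^ Suc i * ?h n (j - i))"
        by (simp only: One_nat_def sum.atLeast1_atMost_eq) simp
      then show ?thesis
        by (simp add: sum_distrib_left mult_ac lessThan_Suc_atMost)
    qed
    have old_terms: "(\<Sum>i=1..Suc j. ?p i * ?h n (Suc j - i))
        = real (Suc j) * ?h n (Suc j) + ?x * ?h (Suc n) j"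
      using IH_n[of "Suc j"] h_shift by (simp add: power_sum_Suc algebra_simps sum.distrib)
    have new_terms: "(\<Sum>i=1..j. ?p i * ?h (Suc n) (Suc j - i))
        = (\<Sum>i=1..j. ?p i * ?h n (Suc j - i)) + ?x * (\<Sum>i=1..j. ?p i * ?h (Suc n) (j - i))"
    proof -
      have "(\<Sum>i=1..j. ?p i * ?h (Suc n) (Suc j - i))
          = (\<Sum>i=1..j. ?p i * ?h n (Suc j - i) + ?x * (?p i * ?h (Suc n) (j - i)))"
      proof (rule sum.cong)
        fix i assume "i \<in> {1..j}"
        then have "Suc j - i = Suc (j - i)" by auto
        then show "?p i * ?h (Suc n) (Suc j - i) = ?p i * ?h n (Suc j - i) + ?x * (?p i * ?h (Suc n) (j - i))"
          by (simp only: complete_hom_Suc_Suc) (simp add: algebra_simps)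
      qed simp
      then show ?thesis
        by (simp add: sum.distrib sum_distrib_left)
    qed
    have "(\<Sum>i=1..Suc j. ?p i * ?h (Suc n) (Suc j - i))
        = (\<Sum>i=1..Suc j. ?p i * ?h n (Suc j - i)) + ?x * (\<Sum>i=1..j. ?p i * ?h (Suc n) (j - i))"
      using new_terms by (simp add: sum.cl_ivl_Suc)
    also have "\<dots> = real (Suc j) * ?h n (Suc j) + ?x * ?h (Suc n) j + ?x * (real j * ?h (Suc n) j)"
      using old_terms Suc.IH by simp
    also have "\<dots> = real (Suc j) * ?h (Suc n) (Suc j)"
      by (simp only: complete_hom_Suc_Suc) (simp add: algebra_simps del: complete_hom.simps)
    finally show ?case by simp
  qed simp
qed

lemma power_sum_scaled_tendsto_zero:
  assumes "\<And>i. 0 \<le> lam i" "\<And>i. lam i \<le> L" "i \<ge> 2"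
  shows "(\<lambda>n. power_sum lam n i / real n ^ i) \<longlonglongrightarrow> 0"
proof -
  have ps: "0 \<le> power_sum lam n i" "power_sum lam n i \<le> real n * L ^ i" for n
    by (rule power_sum_bounds[OF assms(1,2)])+
  have upper: "power_sum lam n i / real n ^ i \<le> L ^ i * (1 / real n) ^ (i - 1)" for n
  proof (cases "n = 0")
    case False
    have "real n ^ i = real n * real n ^ (i - 1)"
      using assms(3) by (simp flip: power_Suc)
    then show ?thesis
      using ps(2)[of n] False by (simp add: divide_le_eq power_divide field_simps)
  qed (use assms ps(1) in \<open>simp add: power_0_left\<close>)
  have lower: "0 \<le> power_sum lam n i / real n ^ i" for n
    using ps(1) by simp
  have "(\<lambda>n. L ^ i * (1 / real n) ^ (i - 1)) \<longlonglongrightarrow> L ^ i * 0 ^ (i - 1)"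
    by (intro tendsto_intros)
  also have "L ^ i * 0 ^ (i - 1) = (0::real)"
    using assms(3) by (simp add: power_0_left)
  finally have lim: "(\<lambda>n. L ^ i * (1 / real n) ^ (i - 1)) \<longlonglongrightarrow> 0" .
  show ?thesis
    by (rule tendsto_sandwich[OF _ _ tendsto_const lim]) (use lower upper in auto)
qed

lemma complete_hom_scaled_recurrence:
  assumes "n > 0"
  shows "fact (Suc j) * complete_hom lam n (Suc j) / real n ^ Suc j
    = (\<Sum>i=1..Suc j. fact j / fact (Suc j - i) * (power_sum lam n i / real n ^ i)
         * (fact (Suc j - i) * complete_hom lam n (Suc j - i) / real n ^ (Suc j - i)))"
proof -
  have "fact (Suc j) * complete_hom lam n (Suc j) = fact j * (real (Suc j) * complete_hom lam n (Suc j))"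
    by (simp add: algebra_simps)
  also have "\<dots> = (\<Sum>i=1..Suc j. fact j * power_sum lam n i * complete_hom lam n (Suc j - i))"
    by (simp only: newton_identity_complete_hom sum_distrib_left mult.assoc)
  finally have "fact (Suc j) * complete_hom lam n (Suc j) / real n ^ Suc j
      = (\<Sum>i=1..Suc j. fact j * power_sum lam n i * complete_hom lam n (Suc j - i)) / real n ^ Suc j"
    by simp
  also have "\<dots> = (\<Sum>i=1..Suc j. fact j * power_sum lam n i * complete_hom lam n (Suc j - i) / real n ^ Suc j)"
    by (rule sum_divide_distrib)
  also have "\<dots> = (\<Sum>i=1..Suc j. fact j / fact (Suc j - i) * (power_sum lam n i / real n ^ i)
         * (fact (Suc j - i) * complete_hom lam n (Suc j - i) / real n ^ (Suc j - i)))"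
  proof (rule sum.cong)
    fix i assume "i \<in> {1..Suc j}"
    then have "real n ^ Suc j = real n ^ i * real n ^ (Suc j - i)"
      by (simp flip: power_add)
    then show "fact j * power_sum lam n i * complete_hom lam n (Suc j - i) / real n ^ Suc j
      = fact j / fact (Suc j - i) * (power_sum lam n i / real n ^ i)
         * (fact (Suc j - i) * complete_hom lam n (Suc j - i) / real n ^ (Suc j - i))"
      using assms by simp
  qed simp
  finally show ?thesis .
qed

lemma complete_hom_scaled_limit:
  assumes "\<And>i. 0 \<le> lam i" "\<And>i. lam i \<le> L"
    and "(\<lambda>n. power_sum lam n 1 / real n) \<longlonglongrightarrow> lb"
  shows "(\<lambda>n. fact j * complete_hom lam n j / real n ^ j) \<longlonglongrightarrow> lb ^ j"
proof (induction j rule: less_induct)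
  case (less j)
  show ?case
  proof (cases j)
    case (Suc j')
    have terms: "(\<lambda>n. fact j' / fact (Suc j' - i) * (power_sum lam n i / real n ^ i)
         * (fact (Suc j' - i) * complete_hom lam n (Suc j' - i) / real n ^ (Suc j' - i)))
        \<longlonglongrightarrow> (if i = 1 then lb ^ j else 0)" if "i \<in> {1..Suc j'}" for i
    proof -
      have IH: "(\<lambda>n. fact (Suc j' - i) * complete_hom lam n (Suc j' - i) / real n ^ (Suc j' - i))
          \<longlonglongrightarrow> lb ^ (Suc j' - i)"
        using less that Suc by auto
      show ?thesis
      proof (cases "i = 1")
        case True
        then show ?thesis
          using tendsto_mult[OF assms(3) IH] Suc by simp
      next
        case False
        then have "(\<lambda>n. power_sum lam n i / real n ^ i) \<longlonglongrightarrow> 0"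
          using that by (intro power_sum_scaled_tendsto_zero[OF assms(1,2)]) auto
        from tendsto_mult[OF tendsto_mult[OF tendsto_const[of "fact j' / fact (Suc j' - i)"] this] IH]
        show ?thesis
          using False by simp
      qed
    qed
    have "(\<lambda>n. fact j * complete_hom lam n j / real n ^ j) \<longlonglongrightarrow> (\<Sum>i=1..Suc j'. if i = 1 then lb ^ j else 0)"
    proof (rule Lim_transform_eventually[OF tendsto_sum[OF terms]])
      show "\<forall>\<^sub>F n in sequentially. (\<Sum>i=1..Suc j'. fact j' / fact (Suc j' - i) * (power_sum lam n i / real n ^ i)
         * (fact (Suc j' - i) * complete_hom lam n (Suc j' - i) / real n ^ (Suc j' - i)))
        = fact j * complete_hom lam n j / real n ^ j"
        using eventually_gt_at_top[of 0] by eventually_elim (simp only: Suc complete_hom_scaled_recurrence)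
    qed
    also have "(\<Sum>i=1..Suc j'. if i = 1 then lb ^ j else 0) = lb ^ j"
      by (simp add: sum.delta)
    finally show ?thesis .
  qed simp
qed

section \<open>Cumulants\<close>

lemma cumulant_Suc:
  "cumulant m (Suc j) = m (Suc j) - (\<Sum>i\<in>{1..<Suc j}. real (j choose (i - 1)) * cumulant m i * m (Suc j - i))"
  by (subst cumulant.simps) simp

lemma cumulant_cong:
  "(\<And>i. 1 \<le> i \<Longrightarrow> i \<le> N \<Longrightarrow> m i = m' i) \<Longrightarrow> cumulant m N = cumulant m' N"
proof (induction N rule: less_induct)
  case (less N)
  show ?case
  proof (cases N)
    case (Suc j)
    have "cumulant m i = cumulant m' i" if "i \<in> {1..<Suc j}" for i
      using less that Suc by auto
    moreover have "m i = m' i" if "i \<in> {1..Suc j}" for i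
      using less.prems that Suc by auto
    ultimately show ?thesis
      unfolding Suc cumulant_Suc by (intro arg_cong2[of _ _ _ _ "(-)"] sum.cong) auto
  qed (simp add: cumulant.simps)
qed

lemma cumulant_scaled_limit:
  assumes "\<And>j. (\<lambda>n. m n (Suc j) / real n ^ j) \<longlonglongrightarrow> c (Suc j)"
  shows "(\<lambda>n. cumulant (m n) (Suc j) / real n ^ j) \<longlonglongrightarrow> c (Suc j)"
proof (induction j rule: less_induct)
  case (less j)
  define t where "t i n = real (j choose (i - 1)) * (cumulant (m n) i / real n ^ (i - 1))
      * (m n (Suc j - i) / real n ^ (j - i)) * (1 / real n)" for i n
  have split: "cumulant (m n) (Suc j) / real n ^ j = m n (Suc j) / real n ^ j - (\<Sum>i\<in>{1..<Suc j}. t i n)"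
    if "n > 0" for n
  proof -
    have "cumulant (m n) (Suc j) / real n ^ j = m n (Suc j) / real n ^ j -
       (\<Sum>i\<in>{1..<Suc j}. real (j choose (i - 1)) * cumulant (m n) i * m n (Suc j - i) / real n ^ j)"
      by (simp only: cumulant_Suc diff_divide_distrib sum_divide_distrib)
    also have "(\<Sum>i\<in>{1..<Suc j}. real (j choose (i - 1)) * cumulant (m n) i * m n (Suc j - i) / real n ^ j)
        = (\<Sum>i\<in>{1..<Suc j}. t i n)"
    proof (rule sum.cong)
      fix i assume "i \<in> {1..<Suc j}"
      then have "real n ^ j = real n ^ (i - 1) * real n ^ (j - i) * real n"
        by (simp flip: power_add power_Suc2)
      then show "real (j choose (i - 1)) * cumulant (m n) i * m n (Suc j - i) / real n ^ j = t i n"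
        using that by (simp add: t_def)
    qed simp
    finally show ?thesis .
  qed
  have "t i \<longlonglongrightarrow> real (j choose (i - 1)) * c i * c (Suc j - i) * 0" if i: "i \<in> {1..<Suc j}" for i
  proof -
    obtain i' where i': "i = Suc i'" "i' < j"
      using i by (cases i) auto
    have "Suc j - i = Suc (j - i)"
      using i by auto
    then show ?thesis
      unfolding t_def using less[OF i'(2)] i'(1)
      by (intro tendsto_mult tendsto_const lim_1_over_n) (simp_all add: assms)
  qed
  then have "(\<lambda>n. m n (Suc j) / real n ^ j - (\<Sum>i\<in>{1..<Suc j}. t i n)) \<longlonglongrightarrow> c (Suc j) - 0"
    by (intro tendsto_diff assms tendsto_null_sum) auto
  then have "(\<lambda>n. m n (Suc j) / real n ^ j - (\<Sum>i\<in>{1..<Suc j}. t i n)) \<longlonglongrightarrow> c (Suc j)"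
    by simp
  then show ?case
    by (rule Lim_transform_eventually) (use eventually_gt_at_top[of 0] in \<open>eventually_elim, simp only: split\<close>)
qed

section \<open>Moments of Gaussian variables\<close>

lemma central_binomial_Suc:
  "Suc k * ((2 * Suc k) choose Suc k) = 2 * (2 * k + 1) * ((2 * k) choose k)"
proof -
  have "Suc k * (Suc k * ((2 * Suc k) choose Suc k)) = Suc k * (2 * Suc (2 * k) * ((2 * k) choose k))"
    using Suc_times_binomial[of k "Suc (2 * k)"] Suc_times_binomial[of k "2 * k"]
      Suc_times_binomial_add[of k k]
    by (simp add: algebra_simps)
  then show ?thesis
    by (simp only: mult_left_cancel[of "Suc k"] nat.distinct(1) not_False_eq_True) simp
qed

lemma gbinomial_minus_one_half:
  "((- 1 / 2 :: real) gchoose k) = (- 1 / 4) ^ k * real ((2 * k) choose k)"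
proof (induction k)
  case (Suc k)
  define C0 where "C0 = real ((2 * k) choose k)"
  define C1 where "C1 = real ((2 * Suc k) choose Suc k)"
  have "C1 * (real k + 1) = 2 * (2 * real k + 1) * C0"
    using arg_cong[OF central_binomial_Suc[of k], of real] by (simp add: C0_def C1_def algebra_simps)
  then have C: "C1 = 2 * (2 * real k + 1) * C0 / (real k + 1)"
    by (simp add: eq_divide_eq)
  have "((- 1 / 2 :: real) gchoose Suc k) = (- 1 / 4) ^ k * C0 * ((- 1 / 2 - real k) / (real k + 1))"
    using Suc.IH by (simp add: gbinomial_Suc_rec C0_def)
  also have "\<dots> = (- 1 / 4) ^ Suc k * C1"
    unfolding C by (simp add: field_simps)
  finally show ?case
    by (simp only: C1_def)
qed simp

lemma central_binomial_convolution:
  "(\<Sum>k\<le>m. ((2 * k) choose k) * ((2 * (m - k)) choose (m - k))) = 4 ^ m"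
proof -
  have "(- 1 / 4 :: real) ^ m * real (\<Sum>k\<le>m. ((2 * k) choose k) * ((2 * (m - k)) choose (m - k)))
      = (\<Sum>k=0..m. ((- 1 / 2 :: real) gchoose k) * ((- 1 / 2) gchoose (m - k)))"
    unfolding of_nat_sum of_nat_mult sum_distrib_left atMost_atLeast0 gbinomial_minus_one_half
    by (intro sum.cong refl) (simp add: mult_ac flip: power_add)
  also have "\<dots> = ((- 1 :: real) gchoose m)"
    by (subst gbinomial_Vandermonde) simp
  also have "\<dots> = (- 1 / 4) ^ m * 4 ^ m"
    using gbinomial_minus[of "1 :: real" m] by (simp flip: binomial_gbinomial power_mult_distrib)
  finally have "real (\<Sum>k\<le>m. ((2 * k) choose k) * ((2 * (m - k)) choose (m - k))) = 4 ^ m"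
    by simp
  then show ?thesis
    by (metis of_nat_numeral of_nat_power of_nat_eq_iff)
qed

lemma product_sigma_finite_std_normal: "product_sigma_finite (\<lambda>_. std_normal_distribution)"
  unfolding product_sigma_finite_def
  using real_dist_normal_dist by (auto intro: prob_space_imp_sigma_finite simp: real_distribution_def)

lemma prob_space_std_normal: "prob_space std_normal_distribution"
  using real_dist_normal_dist by (simp add: real_distribution_def)

definition std_normal_even_moment :: "nat \<Rightarrow> real" where
  "std_normal_even_moment k = fact (2 * k) / (2 ^ k * fact k)"

lemma std_normal_even_moment_pos: "std_normal_even_moment k > 0"
  by (simp add: std_normal_even_moment_def)

lemma nn_integral_std_normal_even_power:
  "(\<integral>\<^sup>+x. ennreal (x ^ (2 * k)) \<partial>std_normal_distribution) = ennreal (std_normal_even_moment k)"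
proof -
  have "(\<integral>\<^sup>+x. ennreal (x ^ (2 * k)) \<partial>std_normal_distribution) = (LINT x|std_normal_distribution. x ^ (2 * k))"
    by (rule nn_integral_eq_integral[OF std_normal_distribution_even_moments(2)]) (auto simp: power_mult)
  then show ?thesis
    by (simp add: std_normal_distribution_even_moments(1) std_normal_even_moment_def)
qed

lemma std_normal_even_moment_mult:
  assumes "i \<le> m"
  shows "real (m choose i) / 2 ^ m * std_normal_even_moment i * std_normal_even_moment (m - i)
    = fact m / 4 ^ m * (real ((2 * i) choose i) * real ((2 * (m - i)) choose (m - i)))"
proof -
  have central: "real ((2 * k) choose k) = fact (2 * k) / (fact k * fact k)" for k
    using binomial_fact[of k "2 * k"] by simp
  have "(2::real) ^ m = 2 ^ i * 2 ^ (m - i)"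
    using assms by (simp flip: power_add)
  moreover have "(4::real) ^ m = 2 ^ m * 2 ^ m"
    by (simp flip: power_mult_distrib)
  ultimately show ?thesis
    unfolding central binomial_fact[OF assms] std_normal_even_moment_def
    by (simp add: field_simps)
qed

lemma nn_integral_sum_cmult:
  assumes "finite I" "\<And>i. i \<in> I \<Longrightarrow> c i \<ge> 0" "\<And>i. i \<in> I \<Longrightarrow> f i \<in> borel_measurable M"
    "\<And>i x. i \<in> I \<Longrightarrow> f i x \<ge> 0"
  shows "(\<integral>\<^sup>+x. ennreal (\<Sum>i\<in>I. c i * f i x) \<partial>M) = (\<Sum>i\<in>I. ennreal (c i) * (\<integral>\<^sup>+x. ennreal (f i x) \<partial>M))"
proof -
  have "(\<integral>\<^sup>+x. ennreal (\<Sum>i\<in>I. c i * f i x) \<partial>M) = (\<integral>\<^sup>+x. (\<Sum>i\<in>I. ennreal (c i) * ennreal (f i x)) \<partial>M)"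
    using assms by (intro nn_integral_cong) (simp add: sum_ennreal[symmetric] ennreal_mult)
  also have "\<dots> = (\<Sum>i\<in>I. (\<integral>\<^sup>+x. ennreal (c i) * ennreal (f i x) \<partial>M))"
    using assms by (intro nn_integral_sum) auto
  also have "\<dots> = (\<Sum>i\<in>I. ennreal (c i) * (\<integral>\<^sup>+x. ennreal (f i x) \<partial>M))"
    using assms by (intro sum.cong refl nn_integral_cmult) auto
  finally show ?thesis .
qed

text \<open>\<open>(a\<^sup>2 + b\<^sup>2) / 2\<close> is standard exponential for independent standard normal \<open>a, b\<close>; here its
  moments are obtained from the normal ones through the central binomial convolution.\<close>
lemma nn_integral_power_add_const:
  assumes "F \<in> borel_measurable M" "\<And>x. F x \<ge> 0" "c \<ge> 0"
  shows "(\<integral>\<^sup>+x. ennreal ((F x + c) ^ j) \<partial>M)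
    = (\<Sum>i\<le>j. ennreal (real (j choose i) * c ^ (j - i)) * (\<integral>\<^sup>+x. ennreal (F x ^ i) \<partial>M))"
proof -
  have "(F x + c) ^ j = (\<Sum>i\<le>j. (real (j choose i) * c ^ (j - i)) * F x ^ i)" for x
    by (simp add: binomial_ring mult_ac)
  then show ?thesis
    using assms by (simp only:) (intro nn_integral_sum_cmult; simp)
qed

lemma nn_integral_std_normal_pair_half_sq_power:
  "(\<integral>\<^sup>+a. (\<integral>\<^sup>+b. ennreal (((a\<^sup>2 + b\<^sup>2) / 2) ^ m) \<partial>std_normal_distribution) \<partial>std_normal_distribution)
    = ennreal (fact m)"
proof -
  let ?N = std_normal_distribution and ?g = std_normal_even_moment
  let ?c = "\<lambda>i. real (m choose i) / 2 ^ m"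
  have [measurable]: "(\<lambda>x::real. x ^ k) \<in> borel_measurable ?N" for k
    by (simp add: measurable_cong_sets[of ?N borel])
  have expand: "((a\<^sup>2 + b\<^sup>2) / 2) ^ m = (\<Sum>i\<le>m. ?c i * a ^ (2 * i) * b ^ (2 * (m - i)))" for a b :: real
  proof -
    have "(a\<^sup>2 + b\<^sup>2) ^ m = (\<Sum>i\<le>m. real (m choose i) * a ^ (2 * i) * b ^ (2 * (m - i)))"
      by (simp only: binomial_ring power_mult)
    then show ?thesis
      by (simp add: power_divide sum_divide_distrib mult_ac)
  qed
  have inner: "(\<integral>\<^sup>+b. ennreal (((a\<^sup>2 + b\<^sup>2) / 2) ^ m) \<partial>?N) = ennreal (\<Sum>i\<le>m. ?c i * ?g (m - i) * a ^ (2 * i))"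
    for a :: real
  proof -
    have "(\<integral>\<^sup>+b. ennreal (((a\<^sup>2 + b\<^sup>2) / 2) ^ m) \<partial>?N)
        = (\<Sum>i\<le>m. ennreal (?c i * a ^ (2 * i)) * (\<integral>\<^sup>+b. ennreal (b ^ (2 * (m - i))) \<partial>?N))"
      unfolding expand by (rule nn_integral_sum_cmult) (auto simp: power_mult)
    also have "\<dots> = (\<Sum>i\<le>m. ennreal (?c i * ?g (m - i) * a ^ (2 * i)))"
      by (intro sum.cong refl, subst nn_integral_std_normal_even_power)
        (simp add: ennreal_mult[symmetric] power_mult std_normal_even_moment_pos less_imp_le mult_ac)
    also have "\<dots> = ennreal (\<Sum>i\<le>m. ?c i * ?g (m - i) * a ^ (2 * i))"
      by (rule sum_ennreal) (simp add: power_mult std_normal_even_moment_pos less_imp_le)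
    finally show ?thesis .
  qed
  have "(\<integral>\<^sup>+a. (\<integral>\<^sup>+b. ennreal (((a\<^sup>2 + b\<^sup>2) / 2) ^ m) \<partial>?N) \<partial>?N)
      = (\<Sum>i\<le>m. ennreal (?c i * ?g (m - i)) * (\<integral>\<^sup>+a. ennreal (a ^ (2 * i)) \<partial>?N))"
    unfolding inner by (rule nn_integral_sum_cmult) (auto simp: power_mult std_normal_even_moment_pos less_imp_le)
  also have "\<dots> = (\<Sum>i\<le>m. ennreal (?c i * ?g i * ?g (m - i)))"
    by (intro sum.cong refl, subst nn_integral_std_normal_even_power)
      (simp add: ennreal_mult[symmetric] std_normal_even_moment_pos less_imp_le mult_ac)
  also have "\<dots> = ennreal (\<Sum>i\<le>m. ?c i * ?g i * ?g (m - i))"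
    by (rule sum_ennreal) (simp add: std_normal_even_moment_pos less_imp_le)
  also have "(\<Sum>i\<le>m. ?c i * ?g i * ?g (m - i))
      = fact m / 4 ^ m * real (\<Sum>i\<le>m. ((2 * i) choose i) * ((2 * (m - i)) choose (m - i)))"
    unfolding of_nat_sum of_nat_mult sum_distrib_left
    by (intro sum.cong refl std_normal_even_moment_mult) simp
  also have "\<dots> = fact m"
    by (simp only: central_binomial_convolution) simp
  finally show ?thesis .
qed

lemma nn_integral_std_normal_pair_half_sq_poly:
  assumes "\<And>i. i \<le> j \<Longrightarrow> K i \<ge> 0"
  shows "(\<integral>\<^sup>+a. (\<integral>\<^sup>+b. ennreal (\<Sum>i\<le>j. K i * ((a\<^sup>2 + b\<^sup>2) / 2) ^ (j - i))
      \<partial>std_normal_distribution) \<partial>std_normal_distribution) = ennreal (\<Sum>i\<le>j. K i * fact (j - i))"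
proof -
  let ?N = std_normal_distribution
  let ?E = "\<lambda>m a. \<integral>\<^sup>+b. ennreal (((a\<^sup>2 + b\<^sup>2) / 2) ^ m) \<partial>?N"
  have [measurable]: "?E m \<in> borel_measurable borel" for m
  proof -
    have "(\<lambda>(a, b). ennreal (((a\<^sup>2 + b\<^sup>2) / 2) ^ m)) \<in> borel_measurable (borel \<Otimes>\<^sub>M ?N)"
      by (simp add: measurable_cong_sets[OF sets_pair_measure_cong[of borel borel ?N borel]])
    then show ?thesis
      using prob_space_std_normal prob_space_imp_sigma_finite
      by (intro sigma_finite_measure.borel_measurable_nn_integral) auto
  qed
  have "(\<integral>\<^sup>+a. (\<integral>\<^sup>+b. ennreal (\<Sum>i\<le>j. K i * ((a\<^sup>2 + b\<^sup>2) / 2) ^ (j - i)) \<partial>?N) \<partial>?N)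
      = (\<integral>\<^sup>+a. (\<Sum>i\<le>j. ennreal (K i) * ?E (j - i) a) \<partial>?N)"
    using assms by (intro nn_integral_cong nn_integral_sum_cmult) auto
  also have "\<dots> = (\<Sum>i\<le>j. ennreal (K i) * (\<integral>\<^sup>+a. ?E (j - i) a \<partial>?N))"
    by (simp add: nn_integral_sum nn_integral_cmult measurable_cong_sets[of ?N borel])
  also have "\<dots> = (\<Sum>i\<le>j. ennreal (K i * fact (j - i)))"
    using assms by (intro sum.cong refl) (simp add: nn_integral_std_normal_pair_half_sq_power ennreal_mult)
  also have "\<dots> = ennreal (\<Sum>i\<le>j. K i * fact (j - i))"
    using assms by (intro sum_ennreal) auto
  finally show ?thesis .
qed

lemma nn_integral_even_power_gaussian:
  assumes "prob_space P" and [measurable]: "Z \<in> borel_measurable P" and "s \<ge> 0"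
    and char: "\<And>t. (CLINT x|P. iexp (t * Z x)) = complex_of_real (exp (- (t\<^sup>2 * s) / 2))"
  shows "(\<integral>\<^sup>+x. ennreal (Z x ^ (2 * j)) \<partial>P) = ennreal (s ^ j * std_normal_even_moment j)"
proof -
  interpret P: prob_space P by fact
  let ?N = std_normal_distribution
  interpret N: real_distribution ?N by (rule real_dist_normal_dist)
  have [measurable]: "(\<lambda>z. sqrt s * z) \<in> borel_measurable ?N"
    by (simp add: measurable_cong_sets[of ?N borel])
  define D1 where "D1 = distr P borel Z"
  define D2 where "D2 = distr ?N borel (\<lambda>z. sqrt s * z)"
  have "char D1 = char D2"
  proof
    fix t
    have "char D1 t = (CLINT x|P. iexp (t * Z x))"
      unfolding char_def D1_def by (subst integral_distr) auto
    also have "\<dots> = complex_of_real (exp (- (t\<^sup>2 * s) / 2))"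
      by (rule char)
    also have "\<dots> = char ?N (t * sqrt s)"
      unfolding char_std_normal_distribution using assms(3) by (simp add: power_mult_distrib)
    also have "\<dots> = char D2 t"
      unfolding char_def D2_def by (subst integral_distr) (auto simp: mult_ac)
    finally show "char D1 t = char D2 t" .
  qed
  then have D: "D1 = D2"
    unfolding D1_def D2_def
    by (intro Levy_uniqueness P.real_distribution_distr N.real_distribution_distr) auto
  have "(\<integral>\<^sup>+x. ennreal (Z x ^ (2 * j)) \<partial>P) = (\<integral>\<^sup>+x. ennreal (x ^ (2 * j)) \<partial>D2)"
    unfolding D[symmetric] D1_def by (subst nn_integral_distr) auto
  also have "\<dots> = (\<integral>\<^sup>+z. ennreal (s ^ j * z ^ (2 * j)) \<partial>?N)"
    unfolding D2_def using assms(3)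
    by (subst nn_integral_distr) (auto simp: power_mult_distrib power_mult real_sqrt_pow2)
  also have "\<dots> = ennreal (s ^ j) * ennreal (std_normal_even_moment j)"
    using assms(3) by (simp add: ennreal_mult nn_integral_cmult flip: nn_integral_std_normal_even_power)
  finally show ?thesis
    using assms(3) by (simp add: ennreal_mult' std_normal_even_moment_pos less_imp_le)
qed

section \<open>The squared norm of a complex Gaussian vector\<close>

text \<open>Real coordinates of \<open>\<complex>\<^sup>n\<close>: the index \<open>(k, True)\<close> stands for the real part of the \<open>k\<close>-th
  entry and \<open>(k, False)\<close> for its imaginary part.\<close>
definition re_im_index :: "nat \<Rightarrow> (nat \<times> bool) set" where
  "re_im_index n = {..<n} \<times> UNIV"

definition re_im_part :: "(nat \<Rightarrow> complex) \<Rightarrow> nat \<times> bool \<Rightarrow> real" where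
  "re_im_part u i = (if snd i then Re (u (fst i)) else Im (u (fst i)))"

definition weighted_sq_sum :: "(nat \<Rightarrow> real) \<Rightarrow> (nat \<times> bool) set \<Rightarrow> (nat \<times> bool \<Rightarrow> real) \<Rightarrow> real" where
  "weighted_sq_sum lam J z = (\<Sum>i\<in>J. lam (fst i) * (z i)\<^sup>2 / 2)"

lemma finite_re_im_index [simp]: "finite (re_im_index n)"
  by (simp add: re_im_index_def)

lemma re_im_index_Suc: "re_im_index (Suc n) = insert (n, True) (insert (n, False) (re_im_index n))"
  by (auto simp: re_im_index_def lessThan_Suc)

lemma sum_re_im_index: "(\<Sum>i\<in>re_im_index n. g i) = (\<Sum>k<n. g (k, True) + g (k, False))"
proof -
  have "(\<Sum>i\<in>re_im_index n. g i) = (\<Sum>k<n. \<Sum>b\<in>UNIV. g (k, b))"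
    unfolding re_im_index_def using sum.cartesian_product[of "\<lambda>k b. g (k, b)" UNIV "{..<n}"] by simp
  then show ?thesis
    by (simp add: UNIV_bool add.commute)
qed

lemma weighted_sq_sum_nonneg: "(\<And>i. 0 \<le> lam i) \<Longrightarrow> 0 \<le> weighted_sq_sum lam J z"
  unfolding weighted_sq_sum_def by (intro sum_nonneg) auto

lemma weighted_sq_sum_insert_upd:
  "finite J \<Longrightarrow> i \<notin> J \<Longrightarrow> weighted_sq_sum lam (insert i J) (z(i := y)) = lam (fst i) * y\<^sup>2 / 2 + weighted_sq_sum lam J z"
  unfolding weighted_sq_sum_def by (auto intro!: sum.cong)

lemma measurable_weighted_sq_sum [measurable]:
  "J \<subseteq> I \<Longrightarrow> weighted_sq_sum lam J \<in> borel_measurable (PiM I (\<lambda>_. std_normal_distribution))"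
  unfolding weighted_sq_sum_def by (intro borel_measurable_sum) (measurable, auto)

lemma nn_integral_weighted_sq_sum_Suc:
  "(\<integral>\<^sup>+z. ennreal (weighted_sq_sum lam (re_im_index (Suc n)) z ^ j)
      \<partial>PiM (re_im_index (Suc n)) (\<lambda>_. std_normal_distribution))
    = (\<integral>\<^sup>+a. (\<integral>\<^sup>+b. (\<integral>\<^sup>+x. ennreal ((weighted_sq_sum lam (re_im_index n) x + lam n * ((a\<^sup>2 + b\<^sup>2) / 2)) ^ j)
      \<partial>PiM (re_im_index n) (\<lambda>_. std_normal_distribution))
      \<partial>std_normal_distribution) \<partial>std_normal_distribution)"
proof -
  let ?N = std_normal_distribution and ?I = "re_im_index n"
  let ?P = "\<lambda>J. PiM J (\<lambda>_. ?N)" and ?F = "(n, False)" and ?T = "(n, True)"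
  interpret product_sigma_finite "\<lambda>_. ?N"
    by (rule product_sigma_finite_std_normal)
  have new: "?F \<notin> ?I" "?T \<notin> insert ?F ?I"
    by (auto simp: re_im_index_def)
  have "(\<integral>\<^sup>+z. ennreal (weighted_sq_sum lam (re_im_index (Suc n)) z ^ j) \<partial>?P (re_im_index (Suc n)))
      = (\<integral>\<^sup>+a. (\<integral>\<^sup>+x. ennreal (weighted_sq_sum lam (insert ?T (insert ?F ?I)) (x(?T := a)) ^ j)
          \<partial>?P (insert ?F ?I)) \<partial>?N)"
    unfolding re_im_index_Suc by (rule product_nn_integral_insert_rev) (use new in auto)
  also have "\<dots> = (\<integral>\<^sup>+a. (\<integral>\<^sup>+x. ennreal ((weighted_sq_sum lam (insert ?F ?I) x + lam n * (a\<^sup>2 / 2)) ^ j)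
      \<partial>?P (insert ?F ?I)) \<partial>?N)"
    using new by (simp add: weighted_sq_sum_insert_upd add.commute)
  also have "\<dots> = (\<integral>\<^sup>+a. (\<integral>\<^sup>+b. (\<integral>\<^sup>+x. ennreal ((weighted_sq_sum lam (insert ?F ?I) (x(?F := b))
      + lam n * (a\<^sup>2 / 2)) ^ j) \<partial>?P ?I) \<partial>?N) \<partial>?N)"
    using new by (intro nn_integral_cong product_nn_integral_insert_rev) auto
  also have "\<dots> = (\<integral>\<^sup>+a. (\<integral>\<^sup>+b. (\<integral>\<^sup>+x. ennreal ((weighted_sq_sum lam ?I x + lam n * ((a\<^sup>2 + b\<^sup>2) / 2)) ^ j)
      \<partial>?P ?I) \<partial>?N) \<partial>?N)"
    using new by (simp add: weighted_sq_sum_insert_upd algebra_simps add_divide_distrib)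
  finally show ?thesis .
qed

lemma nn_integral_weighted_sq_sum_power:
  assumes "\<And>i. 0 \<le> lam i"
  shows "(\<integral>\<^sup>+z. ennreal (weighted_sq_sum lam (re_im_index n) z ^ j)
      \<partial>PiM (re_im_index n) (\<lambda>_. std_normal_distribution)) = ennreal (fact j * complete_hom lam n j)"
proof (induction n arbitrary: j)
  case 0
  then show ?case
    by (simp add: re_im_index_def weighted_sq_sum_def PiM_empty nn_integral_count_space_finite)
next
  case (Suc n)
  let ?F = "weighted_sq_sum lam (re_im_index n)" and ?P = "PiM (re_im_index n) (\<lambda>_. std_normal_distribution)"
  define K where "K i = real (j choose i) * lam n ^ (j - i) * (fact i * complete_hom lam n i)" for i
  have K_nonneg: "K i \<ge> 0" for i
    using assms by (simp add: K_def complete_hom_nonneg)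
  have binomial: "(\<integral>\<^sup>+x. ennreal ((?F x + lam n * e) ^ j) \<partial>?P) = ennreal (\<Sum>i\<le>j. K i * e ^ (j - i))"
    if "e \<ge> 0" for e
  proof -
    have "(\<integral>\<^sup>+x. ennreal ((?F x + lam n * e) ^ j) \<partial>?P)
        = (\<Sum>i\<le>j. ennreal (real (j choose i) * (lam n * e) ^ (j - i)) * (\<integral>\<^sup>+x. ennreal (?F x ^ i) \<partial>?P))"
      using that assms by (intro nn_integral_power_add_const) (auto simp: weighted_sq_sum_nonneg)
    also have "\<dots> = (\<Sum>i\<le>j. ennreal (K i * e ^ (j - i)))"
      unfolding Suc.IH using that assms
      by (intro sum.cong refl, subst ennreal_mult'[symmetric])
        (auto simp: K_def complete_hom_nonneg power_mult_distrib mult_ac)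
    also have "\<dots> = ennreal (\<Sum>i\<le>j. K i * e ^ (j - i))"
      using that K_nonneg by (intro sum_ennreal) auto
    finally show ?thesis .
  qed
  have "(\<Sum>i\<le>j. K i * fact (j - i)) = fact j * (\<Sum>i\<le>j. complete_hom lam n i * lam n ^ (j - i))"
    unfolding sum_distrib_left
    by (intro sum.cong refl) (simp add: K_def binomial_fact field_simps)
  also have "\<dots> = fact j * complete_hom lam (Suc n) j"
    by (subst sum.atLeastAtMost_rev[of _ 0 j, simplified atLeast0AtMost]) simp
  finally have K_sum: "(\<Sum>i\<le>j. K i * fact (j - i)) = fact j * complete_hom lam (Suc n) j" .
  have "(\<integral>\<^sup>+z. ennreal (weighted_sq_sum lam (re_im_index (Suc n)) z ^ j)
      \<partial>PiM (re_im_index (Suc n)) (\<lambda>_. std_normal_distribution))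
    = (\<integral>\<^sup>+a. (\<integral>\<^sup>+b. ennreal (\<Sum>i\<le>j. K i * ((a\<^sup>2 + b\<^sup>2) / 2) ^ (j - i))
      \<partial>std_normal_distribution) \<partial>std_normal_distribution)"
    unfolding nn_integral_weighted_sq_sum_Suc by (intro nn_integral_cong binomial) simp
  also have "\<dots> = ennreal (\<Sum>i\<le>j. K i * fact (j - i))"
    by (rule nn_integral_std_normal_pair_half_sq_poly) (rule K_nonneg)
  finally show ?case
    unfolding K_sum .
qed

text \<open>For the complex vector \<open>w\<close> with real coordinates \<open>z\<close>, this is \<open>Re (w\<^sup>H u)\<close>.\<close>
definition re_im_projection :: "nat \<Rightarrow> (nat \<Rightarrow> complex) \<Rightarrow> (nat \<times> bool \<Rightarrow> real) \<Rightarrow> real" where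
  "re_im_projection n u z = (\<Sum>i\<in>re_im_index n. z i * re_im_part u i)"

lemma char_re_im_projection_std_normal:
  "(CLINT z|PiM (re_im_index n) (\<lambda>_. std_normal_distribution). iexp (t * re_im_projection n u z))
    = complex_of_real (exp (- (t\<^sup>2 * sq_norm_vec n u) / 2))"
proof -
  let ?N = std_normal_distribution
  interpret product_sigma_finite "\<lambda>_. ?N"
    by (rule product_sigma_finite_std_normal)
  interpret N: real_distribution ?N
    by (rule real_dist_normal_dist)
  have factor: "iexp (t * re_im_projection n u z) = (\<Prod>i\<in>re_im_index n. iexp (t * re_im_part u i * z i))" for z
  proof -
    have "\<i> * complex_of_real (t * re_im_projection n u z)
        = (\<Sum>i\<in>re_im_index n. \<i> * complex_of_real (t * re_im_part u i * z i))"
      unfolding re_im_projection_def sum_distrib_left of_real_sum by (simp only: mult_ac)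
    then show ?thesis
      by (simp only: exp_sum[symmetric] finite_re_im_index)
  qed
  have "(CLINT z|PiM (re_im_index n) (\<lambda>_. ?N). iexp (t * re_im_projection n u z))
      = (CLINT z|PiM (re_im_index n) (\<lambda>_. ?N). (\<Prod>i\<in>re_im_index n. iexp (t * re_im_part u i * z i)))"
    by (rule Bochner_Integration.integral_cong[OF refl factor])
  also have "\<dots> = (\<Prod>i\<in>re_im_index n. CLINT y|?N. iexp (t * re_im_part u i * y))"
    by (rule product_integral_prod)
      (auto intro: N.integrable_iexp simp: measurable_cong_sets[of ?N borel])
  also have "\<dots> = (\<Prod>i\<in>re_im_index n. complex_of_real (exp (- (t * re_im_part u i)\<^sup>2 / 2)))"
  proof (rule prod.cong[OF refl])
    fix i
    show "(CLINT y|?N. iexp (t * re_im_part u i * y)) = complex_of_real (exp (- (t * re_im_part u i)\<^sup>2 / 2))"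
      using fun_cong[OF char_std_normal_distribution, of "t * re_im_part u i"] unfolding char_def .
  qed
  also have "\<dots> = complex_of_real (exp (\<Sum>i\<in>re_im_index n. - (t * re_im_part u i)\<^sup>2 / 2))"
    by (simp add: exp_sum)
  also have "(\<Sum>i\<in>re_im_index n. - (t * re_im_part u i)\<^sup>2 / 2) = - (t\<^sup>2 * sq_norm_vec n u) / 2"
  proof -
    have "(\<Sum>i\<in>re_im_index n. (re_im_part u i)\<^sup>2) = sq_norm_vec n u"
      unfolding sum_re_im_index sq_norm_vec_def by (intro sum.cong) (auto simp: re_im_part_def cmod_power2)
    then show ?thesis
      by (simp add: power_mult_distrib sum_negf flip: sum_distrib_left sum_divide_distrib)
  qed
  finally show ?thesis .
qed

lemma char_re_im_projection_complex_gaussian: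
  assumes "complex_gaussian_diag M n lam v"
  shows "(CLINT x|M. iexp (t * re_im_projection n (v x) z))
    = complex_of_real (exp (- (t\<^sup>2 * weighted_sq_sum lam (re_im_index n) z) / 2))"
proof -
  define w where "w k = complex_of_real t * Complex (z (k, True)) (z (k, False))" for k
  have char: "(CLINT x|M. exp (\<i> * complex_of_real (Re (\<Sum>k<n. cnj (w k) * v x k))))
      = exp (- complex_of_real ((\<Sum>k<n. lam k * (cmod (w k))\<^sup>2) / 4))"
    using assms unfolding complex_gaussian_diag_def by blast
  have "Re (\<Sum>k<n. cnj (w k) * v x k) = t * re_im_projection n (v x) z" for x
    unfolding re_im_projection_def sum_re_im_index Re_sum w_def re_im_part_def
    by (simp add: sum_distrib_left algebra_simps)
  moreover have "(\<Sum>k<n. lam k * (cmod (w k))\<^sup>2) / 4 = t\<^sup>2 * weighted_sq_sum lam (re_im_index n) z / 2"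
    unfolding weighted_sq_sum_def sum_re_im_index w_def
    by (simp add: norm_mult cmod_power2 power_mult_distrib sum_distrib_left sum_divide_distrib
        algebra_simps add_divide_distrib)
  ultimately show ?thesis
    using char by (simp add: of_real_exp)
qed

lemma sq_norm_vec_restrict [simp]: "sq_norm_vec n (restrict v {..<n}) = sq_norm_vec n v"
  by (simp add: sq_norm_vec_def)

lemma complex_gaussian_diag_measurable:
  "complex_gaussian_diag M n lam v \<Longrightarrow> k < n \<Longrightarrow> (\<lambda>x. v x k) \<in> borel_measurable M"
  unfolding complex_gaussian_diag_def by blast

lemma measurable_sq_norm_vec:
  assumes "\<And>k. k < n \<Longrightarrow> (\<lambda>x. v x k) \<in> borel_measurable M"
  shows "(\<lambda>x. sq_norm_vec n (v x)) \<in> borel_measurable M"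
  unfolding sq_norm_vec_def
proof (intro borel_measurable_sum)
  fix k assume "k \<in> {..<n}"
  with assms have [measurable]: "(\<lambda>x. v x k) \<in> borel_measurable M"
    by simp
  show "(\<lambda>x. (cmod (v x k))\<^sup>2) \<in> borel_measurable M"
    by measurable
qed

lemma measurable_re_im_projection:
  assumes v: "\<And>k. k < n \<Longrightarrow> (\<lambda>x. v x k) \<in> borel_measurable M"
    and z: "\<And>i. i \<in> re_im_index n \<Longrightarrow> (\<lambda>x. z x i) \<in> borel_measurable M"
  shows "(\<lambda>x. re_im_projection n (v x) (z x)) \<in> borel_measurable M"
  unfolding re_im_projection_def
proof (intro borel_measurable_sum borel_measurable_times z)
  fix i assume "i \<in> re_im_index n"
  then have [measurable]: "(\<lambda>x. v x (fst i)) \<in> borel_measurable M"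
    by (auto simp: re_im_index_def intro: v)
  show "(\<lambda>x. re_im_part (v x) i) \<in> borel_measurable M"
    unfolding re_im_part_def by measurable
qed

lemma nn_integral_re_im_projection_std_normal:
  "(\<integral>\<^sup>+z. ennreal (re_im_projection n u z ^ (2 * j)) \<partial>PiM (re_im_index n) (\<lambda>_. std_normal_distribution))
    = ennreal (sq_norm_vec n u ^ j * std_normal_even_moment j)"
proof (rule nn_integral_even_power_gaussian[OF _ _ sq_norm_vec_nonneg char_re_im_projection_std_normal])
  show "prob_space (PiM (re_im_index n) (\<lambda>_. std_normal_distribution))"
    by (rule prob_space_PiM) (use prob_space_std_normal in auto)
  show "re_im_projection n u \<in> borel_measurable (PiM (re_im_index n) (\<lambda>_. std_normal_distribution))"
    using measurable_re_im_projection[where v = "\<lambda>_. u" and z = "\<lambda>z. z"] by measurable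
qed

lemma nn_integral_re_im_projection_complex_gaussian:
  assumes "prob_space M" and gauss: "complex_gaussian_diag M n lam v" and "\<And>i. 0 \<le> lam i"
  shows "(\<integral>\<^sup>+x. ennreal (re_im_projection n (v x) z ^ (2 * j)) \<partial>M)
    = ennreal (weighted_sq_sum lam (re_im_index n) z ^ j * std_normal_even_moment j)"
proof (rule nn_integral_even_power_gaussian[OF assms(1) _ weighted_sq_sum_nonneg
      char_re_im_projection_complex_gaussian[OF gauss]])
  show "(\<lambda>x. re_im_projection n (v x) z) \<in> borel_measurable M"
    by (rule measurable_re_im_projection[where z = "\<lambda>_. z"])
      (auto intro: complex_gaussian_diag_measurable[OF gauss])
qed (rule assms(3))

text \<open>Up to the factor \<open>std_normal_even_moment j\<close>, both sides equal the integral of \<open>re_im_projection n (v x) z ^ (2 * j)\<close> over \<open>x\<close> and an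
  independent standard Gaussian \<open>z\<close>: for fixed \<open>x\<close> the projection is centred Gaussian with
  variance \<open>sq_norm_vec n (v x)\<close>, for fixed \<open>z\<close> with variance \<open>weighted_sq_sum lam (re_im_index n) z\<close>.\<close>
lemma nn_integral_sq_norm_vec_power:
  assumes "prob_space M" and gauss: "complex_gaussian_diag M n lam v" and "\<And>i. 0 \<le> lam i"
  shows "(\<integral>\<^sup>+x. ennreal (sq_norm_vec n (v x) ^ j) \<partial>M) = ennreal (fact j * complete_hom lam n j)"
proof -
  interpret M: prob_space M by fact
  define G where "G = PiM (re_im_index n) (\<lambda>_. std_normal_distribution)"
  interpret G: prob_space G
    unfolding G_def by (rule prob_space_PiM) (use prob_space_std_normal in auto)
  interpret pair_sigma_finite M G
    by (intro pair_sigma_finite.intro) unfold_locales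
  let ?Y = "\<lambda>x z. re_im_projection n (v x) z" and ?g = "std_normal_even_moment j"
  have v: "\<And>k. k < n \<Longrightarrow> (\<lambda>x. v x k) \<in> borel_measurable M"
    using complex_gaussian_diag_measurable[OF gauss] .
  have "ennreal ?g * (\<integral>\<^sup>+x. ennreal (sq_norm_vec n (v x) ^ j) \<partial>M)
      = (\<integral>\<^sup>+x. ennreal (sq_norm_vec n (v x) ^ j * ?g) \<partial>M)"
    using measurable_sq_norm_vec[OF v] std_normal_even_moment_pos[of j]
    by (simp add: nn_integral_cmult[symmetric] ennreal_mult' mult.commute)
  also have "\<dots> = (\<integral>\<^sup>+x. (\<integral>\<^sup>+z. ennreal (?Y x z ^ (2 * j)) \<partial>G) \<partial>M)"
    unfolding G_def nn_integral_re_im_projection_std_normal ..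
  also have "\<dots> = (\<integral>\<^sup>+z. (\<integral>\<^sup>+x. ennreal (?Y x z ^ (2 * j)) \<partial>M) \<partial>G)"
    using measurable_re_im_projection[where M = "M \<Otimes>\<^sub>M G" and v = "\<lambda>p. v (fst p)" and z = snd] v
    by (intro Fubini'[symmetric]) (simp add: G_def case_prod_beta')
  also have "\<dots> = (\<integral>\<^sup>+z. ennreal ?g * ennreal (weighted_sq_sum lam (re_im_index n) z ^ j) \<partial>G)"
    using std_normal_even_moment_pos[of j]
    by (intro nn_integral_cong, subst nn_integral_re_im_projection_complex_gaussian[OF assms])
      (simp add: ennreal_mult' mult.commute)
  also have "\<dots> = ennreal ?g * (\<integral>\<^sup>+z. ennreal (weighted_sq_sum lam (re_im_index n) z ^ j) \<partial>G)"
    by (rule nn_integral_cmult) (unfold G_def, measurable)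
  also have "\<dots> = ennreal ?g * ennreal (fact j * complete_hom lam n j)"
    unfolding G_def nn_integral_weighted_sq_sum_power[OF assms(3)] ..
  finally show ?thesis
    using std_normal_even_moment_pos[of j] by (simp only: ennreal_mult_cancel_left) simp
qed

section \<open>The randomly selected eigenvalue\<close>

lemma distr_density_indep_event:
  fixes v :: "'a \<Rightarrow> nat \<Rightarrow> complex"
  assumes "prob_space M"
    and V: "(\<lambda>x. restrict (v x) {..<n}) \<in> measurable M (PiM {..<n} (\<lambda>_. borel))"
    and E: "E \<in> sets M" and "c \<ge> 0"
    and indep: "\<And>B. B \<in> sets (PiM {..<n} (\<lambda>_. borel)) \<Longrightarrow>
       measure M {x \<in> E. restrict (v x) {..<n} \<in> B} = c * measure M {x \<in> space M. restrict (v x) {..<n} \<in> B}"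
  shows "distr (density M (indicator E)) (PiM {..<n} (\<lambda>_. borel)) (\<lambda>x. restrict (v x) {..<n})
    = density (distr M (PiM {..<n} (\<lambda>_. borel)) (\<lambda>x. restrict (v x) {..<n})) (\<lambda>_. ennreal c)"
    (is "distr ?D ?P ?V = density (distr M ?P ?V) _")
proof (rule measure_eqI)
  interpret prob_space M by fact
  fix B assume "B \<in> sets (distr ?D ?P ?V)"
  then have B: "B \<in> sets ?P" by simp
  have V_D: "?V \<in> measurable ?D ?P"
    unfolding measurable_cong_sets[OF sets_density refl] by (rule V)
  have "emeasure (distr ?D ?P ?V) B = emeasure M (E \<inter> (?V -` B \<inter> space M))"
    using E measurable_sets[OF V B] by (simp add: emeasure_distr[OF V_D B] emeasure_restricted)
  also have "E \<inter> (?V -` B \<inter> space M) = {x \<in> E. ?V x \<in> B}"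
    using sets.sets_into_space[OF E] by auto
  also have "emeasure M \<dots> = ennreal c * emeasure M (?V -` B \<inter> space M)"
    using indep[OF B] \<open>c \<ge> 0\<close> by (simp add: emeasure_eq_measure ennreal_mult vimage_def Int_def conj_commute)
  also have "\<dots> = emeasure (density (distr M ?P ?V) (\<lambda>_. ennreal c)) B"
    using B by (simp add: emeasure_density nn_integral_cmult_indicator emeasure_distr[OF V B])
  finally show "emeasure (distr ?D ?P ?V) B = emeasure (density (distr M ?P ?V) (\<lambda>_. ennreal c)) B" .
qed simp

lemma nn_integral_indep_event:
  fixes v :: "'a \<Rightarrow> nat \<Rightarrow> complex"
  assumes "prob_space M" and v: "\<And>k. k < n \<Longrightarrow> (\<lambda>x. v x k) \<in> borel_measurable M"
    and E: "E \<in> sets M" and "c \<ge> 0"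
    and indep: "\<And>B. B \<in> sets (PiM {..<n} (\<lambda>_. borel)) \<Longrightarrow>
       measure M {x \<in> E. restrict (v x) {..<n} \<in> B} = c * measure M {x \<in> space M. restrict (v x) {..<n} \<in> B}"
    and f: "f \<in> borel_measurable (PiM {..<n} (\<lambda>_. borel))"
  shows "(\<integral>\<^sup>+x. indicator E x * f (restrict (v x) {..<n}) \<partial>M)
    = ennreal c * (\<integral>\<^sup>+x. f (restrict (v x) {..<n}) \<partial>M)"
proof -
  let ?P = "PiM {..<n} (\<lambda>_. borel) :: (nat \<Rightarrow> complex) measure" and ?V = "\<lambda>x. restrict (v x) {..<n}"
  have V: "?V \<in> measurable M ?P"
    by (rule measurable_restrict) (use v in auto)
  have "(\<integral>\<^sup>+x. indicator E x * f (?V x) \<partial>M) = (\<integral>\<^sup>+x. f (?V x) \<partial>density M (indicator E))"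
    using E V f by (intro nn_integral_density[symmetric]) auto
  also have "\<dots> = (\<integral>\<^sup>+y. f y \<partial>distr (density M (indicator E)) ?P ?V)"
  proof (rule nn_integral_distr[symmetric])
    show "?V \<in> measurable (density M (indicator E)) ?P"
      unfolding measurable_cong_sets[OF sets_density refl] by (rule V)
  qed (use f in simp)
  also have "\<dots> = (\<integral>\<^sup>+y. ennreal c * f y \<partial>distr M ?P ?V)"
    using f by (simp add: distr_density_indep_event[OF assms(1) V E assms(4) indep] nn_integral_density)
  also have "\<dots> = ennreal c * (\<integral>\<^sup>+x. f (?V x) \<partial>M)"
    using V f by (simp add: nn_integral_cmult nn_integral_distr)
  finally show ?thesis .
qed

lemma AE_uniform_index_less:
  assumes "prob_space M" and U: "U \<in> measurable M (count_space UNIV)" and "n \<ge> 1"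
    and uniform: "\<And>i. i < n \<Longrightarrow> measure M {x \<in> space M. U x = i} = 1 / real n"
  shows "AE x in M. U x < n"
proof -
  interpret prob_space M by fact
  have events: "{x \<in> space M. U x = i} \<in> sets M" for i
    using measurable_sets[OF U, of "{i}"] by (simp add: vimage_def Int_def conj_commute)
  have "{x \<in> space M. U x < n} = (\<Union>i<n. {x \<in> space M. U x = i})"
    by auto
  moreover have "measure M (\<Union>i<n. {x \<in> space M. U x = i}) = (\<Sum>i<n. measure M {x \<in> space M. U x = i})"
    by (rule finite_measure_finite_Union) (auto simp: events disjoint_family_on_def)
  ultimately have "prob {x \<in> space M. U x < n} = 1"
    using uniform \<open>n \<ge> 1\<close> by simp
  then show ?thesis
    by (rule AE_prob_1[THEN AE_mp]) auto
qed

lemma eigenvalue_list_rank_one_nth_power: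
  assumes "i < n" "j \<ge> 1"
  shows "(eigenvalue_list n v ! i) ^ j = (if i = n - 1 then sq_norm_vec n v ^ j else 0)"
  using assms by (auto simp: eigenvalue_list_rank_one nth_append)

lemma measurable_eigenvalue_list_nth:
  assumes "n \<ge> 1" and v: "\<And>k. k < n \<Longrightarrow> (\<lambda>x. v x k) \<in> borel_measurable M"
    and U: "U \<in> measurable M (count_space UNIV)"
  shows "(\<lambda>x. eigenvalue_list n (v x) ! U x) \<in> borel_measurable M"
proof (rule measurable_compose_countable[OF _ U])
  fix i
  have [measurable]: "(\<lambda>x. sq_norm_vec n (v x)) \<in> borel_measurable M"
    by (rule measurable_sq_norm_vec[OF v])
  show "(\<lambda>x. eigenvalue_list n (v x) ! i) \<in> borel_measurable M"
    unfolding eigenvalue_list_rank_one[OF \<open>n \<ge> 1\<close>]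
    by (cases "i < n - 1"; cases "i - (n - 1)") (simp_all add: nth_append)
qed

lemma moments_random_eigenvalue:
  fixes v :: "'a \<Rightarrow> nat \<Rightarrow> complex" and U :: "'a \<Rightarrow> nat"
  assumes "prob_space M" and lam: "\<And>i. 0 \<le> lam i" and "n \<ge> 1" and "j \<ge> 1"
    and gauss: "complex_gaussian_diag M n lam v"
    and U: "U \<in> measurable M (count_space UNIV)"
    and uniform: "\<And>i. i < n \<Longrightarrow> measure M {x \<in> space M. U x = i} = 1 / real n"
    and indep: "\<And>i B. B \<in> sets (PiM {..<n} (\<lambda>_. borel)) \<Longrightarrow>
           measure M {x \<in> space M. U x = i \<and> restrict (v x) {..<n} \<in> B}
           = measure M {x \<in> space M. U x = i} * measure M {x \<in> space M. restrict (v x) {..<n} \<in> B}"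
  shows "moments M (\<lambda>x. eigenvalue_list n (v x) ! U x) j = fact j * complete_hom lam n j / real n"
proof -
  interpret prob_space M by fact
  define E where "E = {x \<in> space M. U x = n - 1}"
  define S where "S x = sq_norm_vec n (v x)" for x
  have v: "\<And>k. k < n \<Longrightarrow> (\<lambda>x. v x k) \<in> borel_measurable M"
    using complex_gaussian_diag_measurable[OF gauss] .
  have E: "E \<in> sets M"
    using measurable_sets[OF U, of "{n - 1}"] by (simp add: E_def vimage_def Int_def conj_commute)
  have [measurable]: "S \<in> borel_measurable M"
    unfolding S_def by (rule measurable_sq_norm_vec[OF v])
  have "AE x in M. U x < n"
    using \<open>prob_space M\<close> U \<open>n \<ge> 1\<close> uniform by (rule AE_uniform_index_less)
  with AE_space have "AE x in M. (eigenvalue_list n (v x) ! U x) ^ j = indicator E x * S x ^ j"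
    by eventually_elim (use \<open>j \<ge> 1\<close> in \<open>simp add: eigenvalue_list_rank_one_nth_power E_def S_def\<close>)
  then have "moments M (\<lambda>x. eigenvalue_list n (v x) ! U x) j = (\<integral>x. indicator E x * S x ^ j \<partial>M)"
    unfolding moments_def
    by (rule integral_cong_AE[rotated 2]) (use measurable_eigenvalue_list_nth[OF \<open>n \<ge> 1\<close> v U] E in measurable)
  also have "\<dots> = enn2real (\<integral>\<^sup>+x. ennreal (indicator E x * S x ^ j) \<partial>M)"
    by (rule integral_eq_nn_integral) (use E in \<open>measurable, simp add: S_def sq_norm_vec_nonneg\<close>)
  also have "(\<integral>\<^sup>+x. ennreal (indicator E x * S x ^ j) \<partial>M)
      = (\<integral>\<^sup>+x. indicator E x * ennreal (sq_norm_vec n (restrict (v x) {..<n}) ^ j) \<partial>M)"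
    by (intro nn_integral_cong) (simp add: S_def indicator_def)
  also have "\<dots> = ennreal (1 / real n) * (\<integral>\<^sup>+x. ennreal (sq_norm_vec n (restrict (v x) {..<n}) ^ j) \<partial>M)"
  proof (rule nn_integral_indep_event[OF \<open>prob_space M\<close> v E])
    show "(\<lambda>w. ennreal (sq_norm_vec n w ^ j)) \<in> borel_measurable (PiM {..<n} (\<lambda>_. borel))"
      using measurable_sq_norm_vec[of n "\<lambda>w. w"] by measurable
    show "measure M {x \<in> E. restrict (v x) {..<n} \<in> B} = 1 / real n * measure M {x \<in> space M. restrict (v x) {..<n} \<in> B}"
      if "B \<in> sets (PiM {..<n} (\<lambda>_. borel))" for B
      using indep[OF that] uniform[of "n - 1"] \<open>n \<ge> 1\<close> by (simp add: E_def conj_assoc)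
  qed simp_all
  also have "(\<integral>\<^sup>+x. ennreal (sq_norm_vec n (restrict (v x) {..<n}) ^ j) \<partial>M) = ennreal (fact j * complete_hom lam n j)"
    using nn_integral_sq_norm_vec_power[OF \<open>prob_space M\<close> gauss lam] by simp
  also have "enn2real (ennreal (1 / real n) * ennreal (fact j * complete_hom lam n j)) = fact j * complete_hom lam n j / real n"
    using complete_hom_nonneg[OF lam] by (simp add: ennreal_mult[symmetric])
  finally show ?thesis .
qed

theorem theorem1:
  fixes M :: "'a measure"
    and lam :: "nat \<Rightarrow> real" and lam_max lam_bar :: real
    and v :: "nat \<Rightarrow> 'a \<Rightarrow> nat \<Rightarrow> complex"
    and U :: "nat \<Rightarrow> 'a \<Rightarrow> nat"
  assumes "prob_space M"
    and "\<And>i. 0 \<le> lam i" and "\<And>i. lam i < lam_max"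
    and "(\<lambda>n. (\<Sum>i<n. lam i) / real n) \<longlonglongrightarrow> lam_bar"
    and "\<And>n. n \<ge> 1 \<Longrightarrow> complex_gaussian_diag M n lam (v n)"
    and "\<And>n. n \<ge> 1 \<Longrightarrow> U n \<in> measurable M (count_space UNIV)"
    and "\<And>n j. n \<ge> 1 \<Longrightarrow> j < n \<Longrightarrow> measure M {x \<in> space M. U n x = j} = 1 / real n"
    and "\<And>n j B. n \<ge> 1 \<Longrightarrow> B \<in> sets (PiM {..<n} (\<lambda>_. borel)) \<Longrightarrow>
           measure M {x \<in> space M. U n x = j \<and> restrict (v n x) {..<n} \<in> B}
           = measure M {x \<in> space M. U n x = j} * measure M {x \<in> space M. restrict (v n x) {..<n} \<in> B}"
  shows "\<forall>k. (\<lambda>n. cumulant (moments M (\<lambda>x. eigenvalue_list n (v n x) ! U n x)) (Suc k)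
                  / real n ^ k) \<longlonglongrightarrow> lam_bar ^ (Suc k)"
proof
  fix k
  define m where "m n j = fact j * complete_hom lam n j / real n" for n j
  have moments: "moments M (\<lambda>x. eigenvalue_list n (v n x) ! U n x) j = m n j" if "n \<ge> 1" "j \<ge> 1" for n j
    unfolding m_def by (rule moments_random_eigenvalue[OF assms(1,2) that assms(5-8)[OF that(1)]])
  have h_limit: "(\<lambda>n. fact j * complete_hom lam n j / real n ^ j) \<longlonglongrightarrow> lam_bar ^ j" for j
    using assms(2-4) by (intro complete_hom_scaled_limit[where L = lam_max]) (auto simp: power_sum_def less_imp_le)
  have "(\<lambda>n. m n (Suc j) / real n ^ j) \<longlonglongrightarrow> lam_bar ^ Suc j" for j
    using h_limit[of "Suc j"] unfolding m_def by (simp add: divide_divide_eq_left mult.commute)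
  then have "(\<lambda>n. cumulant (m n) (Suc k) / real n ^ k) \<longlonglongrightarrow> lam_bar ^ Suc k"
    by (rule cumulant_scaled_limit)
  then show "(\<lambda>n. cumulant (moments M (\<lambda>x. eigenvalue_list n (v n x) ! U n x)) (Suc k) / real n ^ k)
      \<longlonglongrightarrow> lam_bar ^ Suc k"
    by (rule Lim_transform_eventually)
      (use eventually_ge_at_top[of 1] in \<open>eventually_elim, simp add: moments cong: cumulant_cong\<close>)
qed

end
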